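(* In a strongly causal, digitalizable OPT, let $\rho\in\mathsf{St}_1(\mathrm{A})$. Let $E^F_{N,M,\varepsilon}(\rho):=\{(\mathcal E,\mathcal D): F(\rho^{\boxtimes N},\mathcal D\circ\mathcal E)>1-\varepsilon\}$ and $I^F(\rho):=\lim_{\varepsilon\to0}\limsup_{N\to\infty}\min\{M:E^F_{N,M,\varepsilon}(\rho)\ne\emptyset\}/N$. Then $I^F(\rho)=I^{\rm dil}(\rho)$.
   Context: Framework (operational probabilistic theory, OPT): each system $\mathrm{A}$ has states $\mathsf{St}(\mathrm{A})$ (normalized ones $\mathsf{St}_1(\mathrm{A})$), effects $\mathsf{Eff}(\mathrm{A})$, transformations $\mathsf{Tr}(\mathrm{A}\to\mathrm{B})$ (channels $\mathsf{Tr}_1$), sequential ($\circ$) and parallel ($\boxtimes$) composition, pairing $(a|\rho)$. Strong causality: for every test $\{\mathcal A_i\}$ and tests $\{\mathcal B^i_j\}_j$, $\{\mathcal B^i_j\circ\mathcal A_i\}$ is a test; unique deterministic effect $e_{\mathrm{A}}$. Operational norm $\|\delta\|_{\rm op}:=\sup_{a\in\mathsf{Eff}(\mathrm{A})}((2a-e_{\mathrm{A}})|\delta)$. A dilation of $\rho\in\mathsf{St}(\mathrm{A})$ is $\Psi\in\mathsf{St}(\mathrm{A}\mathrm{C})$ with $(\mathcal I_{\mathrm{A}}\boxtimes e_{\mathrm{C}})\Psi=\rho$; $D_\rho$ is the set of dilations. Digitalizability: there is an obit system $\mathrm{O}$ such that every system $\mathrm{X}$ can be perfectly encoded via channels into $\mathrm{O}^{\boxtimes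 k}$ for some finite $k$. A compression scheme for $\rho$ is $\mathcal E\in\mathsf{Tr}_1(\mathrm{A}^{\boxtimes N}\to\mathrm{O}^{\boxtimes M})$, $\mathcal D\in\mathsf{Tr}_1(\mathrm{O}^{\boxtimes M}\to\mathrm{A}^{\boxtimes N})$. Fidelity: for $\rho,\sigma\in\mathsf{St}_1(\mathrm{A})$, $F(\rho,\sigma):=\inf_{\{a_i\}}\sum_i\sqrt{(a_i|\rho)(a_i|\sigma)}$, infimum over observation tests $\{a_i\}$ of $\mathrm{A}$. Correlation fidelity of $\rho\in\mathsf{St}_1(\mathrm{A})$ and a channel $\mathcal C\in\mathsf{Tr}_1(\mathrm{A}\to\mathrm{A})$: $F(\rho,\mathcal C):=\inf_{\Psi\in D_\rho}F[\Psi,(\mathcal C\boxtimes\mathcal I)(\Psi)]^2$. $I^{\rm dil}$: $E^{\rm dil}_{N,M,\varepsilon}(\rho)$ is the set of compression schemes with $\sup_{\Psi\in D_{\rho^{\boxtimes N}}}\|((\mathcal D\circ\mathcal E)\boxtimes\mathcal I)(\Psi)-\Psi\|_{\rm op}<\varepsilon$, and $I^{\rm dil}(\rho):=\lim_{\varepsilon\to0}\limsup_{N\to\infty}\min\{M:E^{\rm dil}_{N,M,\varepsilon}(\rho)\ne\emptyset\}/N$. *)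

theory Defs
  imports Complex_Main "HOL-Library.Extended_Real" "HOL-Library.Liminf_Limsup"
begin

text \<open>Systems have type 's, events (elements of tests, i.e. transformations) have type 'e.
  Tests are finite nonempty lists of events (outcomes indexed by list positions).\<close>

record ('s, 'e) opt =
  triv    :: 's
  psys    :: "'s \<Rightarrow> 's \<Rightarrow> 's"
  sdom    :: "'e \<Rightarrow> 's"
  scod    :: "'e \<Rightarrow> 's"
  seq     :: "'e \<Rightarrow> 'e \<Rightarrow> 'e"         \<comment> \<open>seq g f = g \<circ> f\<close>
  par     :: "'e \<Rightarrow> 'e \<Rightarrow> 'e"
  ident   :: "'s \<Rightarrow> 'e"
  swap    :: "'s \<Rightarrow> 's \<Rightarrow> 'e"
  cg      :: "'e \<Rightarrow> 'e \<Rightarrow> 'e"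
  tests   :: "'e list set"
  prb     :: "'e \<Rightarrow> real"             \<comment> \<open>probability of an event I \<rightarrow> I\<close>

definition is_test :: "('s,'e) opt \<Rightarrow> 'e list \<Rightarrow> 's \<Rightarrow> 's \<Rightarrow> bool" where
  "is_test T t A B \<longleftrightarrow> t \<in> tests T \<and> (\<forall>f\<in>set t. sdom T f = A \<and> scod T f = B)"

definition Tr :: "('s,'e) opt \<Rightarrow> 's \<Rightarrow> 's \<Rightarrow> 'e set" where
  "Tr T A B = {f. \<exists>t. is_test T t A B \<and> f \<in> set t}"

text \<open>Deterministic transformations (channels): singleton tests.\<close>
definition Tr1 :: "('s,'e) opt \<Rightarrow> 's \<Rightarrow> 's \<Rightarrow> 'e set" where
  "Tr1 T A B = {f. is_test T [f] A B}"

definition St :: "('s,'e) opt \<Rightarrow> 's \<Rightarrow> 'e set" where "St T A = Tr T (triv T) A"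
definition St1 :: "('s,'e) opt \<Rightarrow> 's \<Rightarrow> 'e set" where "St1 T A = Tr1 T (triv T) A"
definition Eff :: "('s,'e) opt \<Rightarrow> 's \<Rightarrow> 'e set" where "Eff T A = Tr T A (triv T)"

definition pairing :: "('s,'e) opt \<Rightarrow> 'e \<Rightarrow> 'e \<Rightarrow> real" where
  "pairing T a \<rho> = prb T (seq T a \<rho>)"

text \<open>f and g occur as distinct outcomes of a common test (so their coarse graining is meaningful).\<close>
definition cg_ok :: "('s,'e) opt \<Rightarrow> 'e \<Rightarrow> 'e \<Rightarrow> bool" where
  "cg_ok T f g \<longleftrightarrow> (\<exists>t i j. t \<in> tests T \<and> i < length t \<and> j < length t \<and> i \<noteq> j \<and> t!i = f \<and> t!j = g)"

definition OPT :: "('s,'e) opt \<Rightarrow> bool" where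
  "OPT T \<longleftrightarrow>
    \<comment> \<open>category\<close>
    (\<forall>f g. scod T f = sdom T g \<longrightarrow> sdom T (seq T g f) = sdom T f \<and> scod T (seq T g f) = scod T g) \<and>
    (\<forall>f g h. scod T f = sdom T g \<and> scod T g = sdom T h \<longrightarrow>
        seq T h (seq T g f) = seq T (seq T h g) f) \<and>
    (\<forall>A. sdom T (ident T A) = A \<and> scod T (ident T A) = A) \<and>
    (\<forall>f. seq T (ident T (scod T f)) f = f \<and> seq T f (ident T (sdom T f)) = f) \<and>
    \<comment> \<open>strict monoidal structure\<close>
    (\<forall>A B C. psys T A (psys T B C) = psys T (psys T A B) C) \<and>
    (\<forall>A. psys T (triv T) A = A \<and> psys T A (triv T) = A) \<and>
    (\<forall>f g. sdom T (par T f g) = psys T (sdom T f) (sdom T g) \<and>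
           scod T (par T f g) = psys T (scod T f) (scod T g)) \<and>
    (\<forall>f g h. par T f (par T g h) = par T (par T f g) h) \<and>
    (\<forall>f. par T (ident T (triv T)) f = f \<and> par T f (ident T (triv T)) = f) \<and>
    (\<forall>A B. par T (ident T A) (ident T B) = ident T (psys T A B)) \<and>
    (\<forall>f1 f2 g1 g2. scod T f1 = sdom T g1 \<and> scod T f2 = sdom T g2 \<longrightarrow>
        par T (seq T g1 f1) (seq T g2 f2) = seq T (par T g1 g2) (par T f1 f2)) \<and>
    \<comment> \<open>symmetry\<close>
    (\<forall>A B. sdom T (swap T A B) = psys T A B \<and> scod T (swap T A B) = psys T B A) \<and>
    (\<forall>A B. seq T (swap T B A) (swap T A B) = ident T (psys T A B)) \<and>
    (\<forall>f g. seq T (swap T (scod T f) (scod T g)) (par T f g) =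
           seq T (par T g f) (swap T (sdom T f) (sdom T g))) \<and>
    \<comment> \<open>probabilities of events I \<rightarrow> I\<close>
    (\<forall>p q. sdom T p = triv T \<and> scod T p = triv T \<and> sdom T q = triv T \<and> scod T q = triv T \<longrightarrow>
        prb T (seq T p q) = prb T p * prb T q \<and> prb T (par T p q) = prb T p * prb T q) \<and>
    (\<forall>p q. cg_ok T p q \<and> sdom T p = triv T \<and> scod T p = triv T \<longrightarrow>
        prb T (cg T p q) = prb T p + prb T q) \<and>
    \<comment> \<open>tests\<close>
    (\<forall>t\<in>tests T. t \<noteq> [] \<and> (\<forall>f\<in>set t. \<forall>g\<in>set t. sdom T f = sdom T g \<and> scod T f = scod T g)) \<and>
    (\<forall>t. is_test T t (triv T) (triv T) \<longrightarrow> (\<forall>p\<in>set t. 0 \<le> prb T p) \<and> sum_list (map (prb T) t) = 1) \<and>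
    (\<forall>A. [ident T A] \<in> tests T) \<and>
    (\<forall>A B. [swap T A B] \<in> tests T) \<and>
    (\<forall>t u A B C. is_test T t A B \<and> is_test T u B C \<longrightarrow>
        concat (map (\<lambda>f. map (\<lambda>g. seq T g f) u) t) \<in> tests T) \<and>
    (\<forall>t u. t \<in> tests T \<and> u \<in> tests T \<longrightarrow>
        concat (map (\<lambda>f. map (\<lambda>g. par T f g) u) t) \<in> tests T) \<and>
    \<comment> \<open>coarse graining\<close>
    (\<forall>t i j. t \<in> tests T \<and> i < length t \<and> j < length t \<and> i \<noteq> j \<longrightarrow>
        cg T (t!i) (t!j) #
            map (\<lambda>k. t!k) (filter (\<lambda>k. k \<noteq> i \<and> k \<noteq> j) [0..<length t]) \<in> tests T) \<and>
    (\<forall>f g. cg_ok T f g \<longrightarrow> sdom T (cg T f g) = sdom T f \<and> scod T (cg T f g) = scod T f) \<and>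
    (\<forall>f g h. cg_ok T f g \<and> scod T f = sdom T h \<and> scod T g = sdom T h \<longrightarrow>
        seq T h (cg T f g) = cg T (seq T h f) (seq T h g)) \<and>
    (\<forall>f g h. cg_ok T f g \<and> scod T h = sdom T f \<and> scod T h = sdom T g \<longrightarrow>
        seq T (cg T f g) h = cg T (seq T f h) (seq T g h)) \<and>
    (\<forall>f g h. cg_ok T f g \<longrightarrow> par T (cg T f g) h = cg T (par T f h) (par T g h) \<and>
             par T h (cg T f g) = cg T (par T h f) (par T h g)) \<and>
    \<comment> \<open>events are identified by their statistics in all circuits (with ancillas)\<close>
    (\<forall>f g A B. f \<in> Tr T A B \<and> g \<in> Tr T A B \<and>
       (\<forall>E \<Psi> a. \<Psi> \<in> St T (psys T A E) \<and> a \<in> Eff T (psys T B E) \<longrightarrow>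
          pairing T a (seq T (par T f (ident T E)) \<Psi>) = pairing T a (seq T (par T g (ident T E)) \<Psi>))
       \<longrightarrow> f = g)"

definition strongly_causal :: "('s,'e) opt \<Rightarrow> bool" where
  "strongly_causal T \<longleftrightarrow>
    (\<forall>t A B C us. is_test T t A B \<and> length us = length t \<and> (\<forall>i<length t. is_test T (us!i) B C) \<longrightarrow>
       concat (map (\<lambda>i. map (\<lambda>g. seq T g (t!i)) (us!i)) [0..<length t]) \<in> tests T) \<and>
    (\<forall>A. \<exists>!e. e \<in> Tr1 T A (triv T))"

definition det_eff :: "('s,'e) opt \<Rightarrow> 's \<Rightarrow> 'e" where
  "det_eff T A = (THE e. e \<in> Tr1 T A (triv T))"

fun sys_pow :: "('s,'e) opt \<Rightarrow> 's \<Rightarrow> nat \<Rightarrow> 's" where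
  "sys_pow T A 0 = triv T"
| "sys_pow T A (Suc n) = psys T A (sys_pow T A n)"

fun ev_pow :: "('s,'e) opt \<Rightarrow> 'e \<Rightarrow> nat \<Rightarrow> 'e" where
  "ev_pow T f 0 = ident T (triv T)"
| "ev_pow T f (Suc n) = par T f (ev_pow T f n)"

text \<open>Digitalizability with obit system Ob: perfect encoding of every system into Ob^k.\<close>
definition digitalizable_via :: "('s,'e) opt \<Rightarrow> 's \<Rightarrow> bool" where
  "digitalizable_via T Ob \<longleftrightarrow>
    (\<forall>X. \<exists>k E D. E \<in> Tr1 T X (sys_pow T Ob k) \<and> D \<in> Tr1 T (sys_pow T Ob k) X \<and>
                  seq T D E = ident T X)"

definition op_dist :: "('s,'e) opt \<Rightarrow> 's \<Rightarrow> 'e \<Rightarrow> 'e \<Rightarrow> real" where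
  "op_dist T A \<Psi>' \<Psi> = (SUP a \<in> Eff T A.
      (2 * pairing T a \<Psi>' - pairing T (det_eff T A) \<Psi>') -
      (2 * pairing T a \<Psi> - pairing T (det_eff T A) \<Psi>))"

definition fidelity :: "('s,'e) opt \<Rightarrow> 's \<Rightarrow> 'e \<Rightarrow> 'e \<Rightarrow> real" where
  "fidelity T A \<rho> \<sigma> = (INF t \<in> {t. is_test T t A (triv T)}.
      sum_list (map (\<lambda>a. sqrt (pairing T a \<rho> * pairing T a \<sigma>)) t))"

definition dilations :: "('s,'e) opt \<Rightarrow> 's \<Rightarrow> 'e \<Rightarrow> ('s \<times> 'e) set" where
  "dilations T A \<rho> = {(C, \<Psi>). \<Psi> \<in> St T (psys T A C) \<and>
      seq T (par T (ident T A) (det_eff T C)) \<Psi> = \<rho>}"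

definition corr_fidelity :: "('s,'e) opt \<Rightarrow> 's \<Rightarrow> 'e \<Rightarrow> 'e \<Rightarrow> real" where
  "corr_fidelity T A \<rho> Ch = (INF (C, \<Psi>) \<in> dilations T A \<rho>.
      (fidelity T (psys T A C) \<Psi> (seq T (par T Ch (ident T C)) \<Psi>))\<^sup>2)"

definition schemes_F :: "('s,'e) opt \<Rightarrow> 's \<Rightarrow> 's \<Rightarrow> 'e \<Rightarrow> nat \<Rightarrow> nat \<Rightarrow> real \<Rightarrow> ('e \<times> 'e) set" where
  "schemes_F T Ob A \<rho> N M \<epsilon> = {(E, D). E \<in> Tr1 T (sys_pow T A N) (sys_pow T Ob M) \<and>
      D \<in> Tr1 T (sys_pow T Ob M) (sys_pow T A N) \<and>
      corr_fidelity T (sys_pow T A N) (ev_pow T \<rho> N) (seq T D E) > 1 - \<epsilon>}"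

definition schemes_dil :: "('s,'e) opt \<Rightarrow> 's \<Rightarrow> 's \<Rightarrow> 'e \<Rightarrow> nat \<Rightarrow> nat \<Rightarrow> real \<Rightarrow> ('e \<times> 'e) set" where
  "schemes_dil T Ob A \<rho> N M \<epsilon> = {(E, D). E \<in> Tr1 T (sys_pow T A N) (sys_pow T Ob M) \<and>
      D \<in> Tr1 T (sys_pow T Ob M) (sys_pow T A N) \<and>
      (SUP (C, \<Psi>) \<in> dilations T (sys_pow T A N) (ev_pow T \<rho> N).
         op_dist T (psys T (sys_pow T A N) C) (seq T (par T (seq T D E) (ident T C)) \<Psi>) \<Psi>) < \<epsilon>}"

definition comp_rate :: "(nat \<Rightarrow> nat \<Rightarrow> real \<Rightarrow> ('e \<times> 'e) set) \<Rightarrow> ereal" where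
  "comp_rate S = Lim (at_right (0::real))
     (\<lambda>\<epsilon>. limsup (\<lambda>N. ereal (real (LEAST M. S N M \<epsilon> \<noteq> {}) / real N)))"

definition I_F :: "('s,'e) opt \<Rightarrow> 's \<Rightarrow> 's \<Rightarrow> 'e \<Rightarrow> ereal" where
  "I_F T Ob A \<rho> = comp_rate (schemes_F T Ob A \<rho>)"

definition I_dil :: "('s,'e) opt \<Rightarrow> 's \<Rightarrow> 's \<Rightarrow> 'e \<Rightarrow> ereal" where
  "I_dil T Ob A \<rho> = comp_rate (schemes_dil T Ob A \<rho>)"

end

theory Submission
  imports Defs "HOL-Analysis.Convex"
begin

text \<open>
  The two figures of merit are tied together by the Fuchs--van de Graaf inequalities, which hold
  for any two normalized states \<open>\<Psi>, \<Phi>\<close> of a system with fidelity \<open>F\<close> and operational distance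
  \<open>d\<close>:  \<open>1 - d \<le> F\<^sup>2\<close>  and  \<open>d \<le> 2 sqrt (1 - F\<^sup>2)\<close>.  Both come from coarse-graining an observation
  test.  Merging the outcomes on which \<open>\<Phi>\<close> is more likely than \<open>\<Psi>\<close> into a single effect shows
  that the Bhattacharyya sum of any test is at least \<open>\<Sum> min(p\<^sub>k, q\<^sub>k) \<ge> 1 - d/2\<close>; conversely
  the Cauchy--Schwarz inequality on the outcomes other than a given effect \<open>a\<close> reduces the
  fidelity to that of the two-outcome test \<open>{a, e - a}\<close>, whose bias is at most \<open>sqrt (1 - F\<^sup>2)\<close>.

  Applied to all dilations of \<open>\<rho>\<^sup>\<otimes>\<^sup>N\<close> at once, a scheme whose dilation error is below \<open>\<epsilon>\<close> has
  correlation fidelity above \<open>1 - \<epsilon>\<close>, and one with correlation fidelity above \<open>1 - \<epsilon>\<close> has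
  dilation error below \<open>2 sqrt \<epsilon>\<close>.  So each minimal code length is bounded by the other at a
  rescaled accuracy, and the limits \<open>\<epsilon> \<rightarrow> 0\<close> coincide.  Digitalizability supplies error-free
  schemes for every block length, so all the minima are attained.
\<close>

lemma sum_sqrt_mult_le:
  fixes x y :: "'a \<Rightarrow> real"
  assumes "\<And>k. k \<in> K \<Longrightarrow> 0 \<le> x k" "\<And>k. k \<in> K \<Longrightarrow> 0 \<le> y k"
  shows "(\<Sum>k\<in>K. sqrt (x k * y k)) \<le> sqrt ((\<Sum>k\<in>K. x k) * (\<Sum>k\<in>K. y k))"
proof -
  have "(\<Sum>k\<in>K. sqrt (x k * y k))\<^sup>2 = (\<Sum>k\<in>K. sqrt (x k) * sqrt (y k))\<^sup>2"
    by (simp add: real_sqrt_mult)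
  also have "\<dots> \<le> (\<Sum>k\<in>K. (sqrt (x k))\<^sup>2) * (\<Sum>k\<in>K. (sqrt (y k))\<^sup>2)"
    by (rule Cauchy_Schwarz_ineq_sum)
  also have "\<dots> = (\<Sum>k\<in>K. x k) * (\<Sum>k\<in>K. y k)"
    using assms by (simp cong: sum.cong)
  finally show ?thesis by (rule real_le_rsqrt)
qed

text \<open>
  Writing \<open>p = a\<^sup>2, 1 - p = c\<^sup>2, q = b\<^sup>2, 1 - q = d\<^sup>2\<close>, the identity
  \<open>(ab + cd)\<^sup>2 + (ad - bc)\<^sup>2 = 1\<close> bounds \<open>|ad - bc|\<close>, and \<open>q - p = (bc - ad)(bc + ad)\<close> with \<open>bc + ad \<le> 1\<close>.
\<close>

lemma two_outcome_bias_le: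
  fixes p q F :: real
  assumes "0 \<le> p" "p \<le> 1" "0 \<le> q" "q \<le> 1" "0 \<le> F"
    and F: "F \<le> sqrt (p * q) + sqrt ((1 - p) * (1 - q))"
  shows "q - p \<le> sqrt (1 - F\<^sup>2)"
proof -
  define a b c d where "a = sqrt p" "b = sqrt q" "c = sqrt (1 - p)" "d = sqrt (1 - q)"
  have sq: "a\<^sup>2 = p" "b\<^sup>2 = q" "c\<^sup>2 = 1 - p" "d\<^sup>2 = 1 - q"
    using assms unfolding a_b_c_d_def by simp_all
  have F_le: "F \<le> a * b + c * d"
    using F assms unfolding a_b_c_d_def by (simp add: real_sqrt_mult)
  have "(a * b + c * d)\<^sup>2 + (a * d - b * c)\<^sup>2 = (a\<^sup>2 + c\<^sup>2) * (b\<^sup>2 + d\<^sup>2)"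
    "(a * d + b * c)\<^sup>2 + (a * b - c * d)\<^sup>2 = (a\<^sup>2 + c\<^sup>2) * (b\<^sup>2 + d\<^sup>2)"
    by (simp_all add: power2_eq_square algebra_simps)
  then have unit: "(a * b + c * d)\<^sup>2 + (a * d - b * c)\<^sup>2 = 1" "(a * d + b * c)\<^sup>2 + (a * b - c * d)\<^sup>2 = 1"
    using sq by simp_all
  have "p - q = a\<^sup>2 * (b\<^sup>2 + d\<^sup>2) - b\<^sup>2 * (a\<^sup>2 + c\<^sup>2)"
    using sq by simp
  also have "\<dots> = (a * d - b * c) * (a * d + b * c)"
    by (simp add: power2_eq_square algebra_simps)
  finally have "(q - p)\<^sup>2 = (a * d - b * c)\<^sup>2 * (a * d + b * c)\<^sup>2"
    by (simp add: power2_commute[of q] power_mult_distrib)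
  also have "\<dots> \<le> (a * d - b * c)\<^sup>2"
    using unit(2) zero_le_power2[of "a * b - c * d"] by (intro mult_left_le) (linarith, simp)
  also have "\<dots> \<le> 1 - F\<^sup>2"
    using unit(1) power_mono[OF F_le \<open>0 \<le> F\<close>, of 2] by linarith
  finally show ?thesis by (simp add: real_le_rsqrt abs_le_iff)
qed

lemma nth_image_indices: "nth xs ` {m. m < length xs \<and> xs!m \<in> S} = set xs \<inter> S"
  by (auto simp: in_set_conv_nth)

lemma min_le_sqrt_mult:
  fixes p q :: real
  assumes "0 \<le> p" "0 \<le> q"
  shows "min p q \<le> sqrt (p * q)"
proof -
  have "(min p q)\<^sup>2 \<le> p * q"
    using assms by (cases "p \<le> q") (auto simp: power2_eq_square intro: mult_mono)
  then show ?thesis using assms by (simp add: real_le_rsqrt)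
qed

locale opt_theory =
  fixes T :: "('s, 'e) opt"
  assumes OPT: "OPT T"
begin

lemma OPT_axioms:
  shows "\<forall>f g. scod T f = sdom T g \<longrightarrow>
      sdom T (seq T g f) = sdom T f \<and> scod T (seq T g f) = scod T g"
  and "\<forall>f g h. scod T f = sdom T g \<and> scod T g = sdom T h \<longrightarrow>
      seq T h (seq T g f) = seq T (seq T h g) f"
  and "\<forall>A. sdom T (ident T A) = A \<and> scod T (ident T A) = A"
  and "\<forall>f. seq T (ident T (scod T f)) f = f \<and> seq T f (ident T (sdom T f)) = f"
  and "\<forall>A. psys T (triv T) A = A \<and> psys T A (triv T) = A"
  and "\<forall>f g. sdom T (par T f g) = psys T (sdom T f) (sdom T g) \<and>
      scod T (par T f g) = psys T (scod T f) (scod T g)"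
  and "\<forall>A B. par T (ident T A) (ident T B) = ident T (psys T A B)"
  and "\<forall>p q. cg_ok T p q \<and> sdom T p = triv T \<and> scod T p = triv T \<longrightarrow>
      prb T (cg T p q) = prb T p + prb T q"
  and "\<forall>t\<in>tests T. t \<noteq> [] \<and> (\<forall>f\<in>set t. \<forall>g\<in>set t. sdom T f = sdom T g \<and> scod T f = scod T g)"
  and "\<forall>t. is_test T t (triv T) (triv T) \<longrightarrow>
      (\<forall>p\<in>set t. 0 \<le> prb T p) \<and> sum_list (map (prb T) t) = 1"
  and "\<forall>A. [ident T A] \<in> tests T"
  and "\<forall>t u A B C. is_test T t A B \<and> is_test T u B C \<longrightarrow>
      concat (map (\<lambda>f. map (\<lambda>g. seq T g f) u) t) \<in> tests T"
  and "\<forall>t u. t \<in> tests T \<and> u \<in> tests T \<longrightarrow>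
      concat (map (\<lambda>f. map (\<lambda>g. par T f g) u) t) \<in> tests T"
  and "\<forall>t i j. t \<in> tests T \<and> i < length t \<and> j < length t \<and> i \<noteq> j \<longrightarrow>
      cg T (t!i) (t!j) # map (\<lambda>k. t!k) (filter (\<lambda>k. k \<noteq> i \<and> k \<noteq> j) [0..<length t]) \<in> tests T"
  and "\<forall>f g. cg_ok T f g \<longrightarrow> sdom T (cg T f g) = sdom T f \<and> scod T (cg T f g) = scod T f"
  and "\<forall>f g h. cg_ok T f g \<and> scod T h = sdom T f \<and> scod T h = sdom T g \<longrightarrow>
      seq T (cg T f g) h = cg T (seq T f h) (seq T g h)"
  using OPT unfolding OPT_def by - (elim conjE, assumption)+

lemma dom_seq:
  "scod T f = sdom T g \<Longrightarrow> sdom T (seq T g f) = sdom T f \<and> scod T (seq T g f) = scod T g"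
  using OPT_axioms(1) by blast

lemma seq_assoc:
  "scod T f = sdom T g \<Longrightarrow> scod T g = sdom T h \<Longrightarrow> seq T h (seq T g f) = seq T (seq T h g) f"
  using OPT_axioms(2) by blast

lemma dom_ident [simp]: "sdom T (ident T A) = A" "scod T (ident T A) = A"
  using OPT_axioms(3) by blast+

lemma seq_ident_left: "seq T (ident T (scod T f)) f = f"
  using OPT_axioms(4) by blast

lemma psys_triv [simp]: "psys T (triv T) A = A" "psys T A (triv T) = A"
  using OPT_axioms(5) by blast+

lemma dom_par [simp]:
  "sdom T (par T f g) = psys T (sdom T f) (sdom T g)"
  "scod T (par T f g) = psys T (scod T f) (scod T g)"
  using OPT_axioms(6) by blast+

lemma par_ident: "par T (ident T A) (ident T B) = ident T (psys T A B)"
  using OPT_axioms(7) by blast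

lemma prb_cg:
  "cg_ok T p q \<Longrightarrow> sdom T p = triv T \<Longrightarrow> scod T p = triv T \<Longrightarrow>
    prb T (cg T p q) = prb T p + prb T q"
  using OPT_axioms(8) by blast

lemma tests_nonempty: "t \<in> tests T \<Longrightarrow> t \<noteq> []"
  using OPT_axioms(9) by blast

lemma prb_test:
  "is_test T t (triv T) (triv T) \<Longrightarrow> (\<forall>p\<in>set t. 0 \<le> prb T p) \<and> sum_list (map (prb T) t) = 1"
  using OPT_axioms(10) by blast

lemma ident_test: "[ident T A] \<in> tests T"
  using OPT_axioms(11) by blast

lemma seq_test:
  "is_test T t A B \<Longrightarrow> is_test T u B C \<Longrightarrow> concat (map (\<lambda>f. map (\<lambda>g. seq T g f) u) t) \<in> tests T"
  using OPT_axioms(12) by blast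

lemma par_test:
  "t \<in> tests T \<Longrightarrow> u \<in> tests T \<Longrightarrow> concat (map (\<lambda>f. map (\<lambda>g. par T f g) u) t) \<in> tests T"
  using OPT_axioms(13) by blast

lemma cg_test:
  "t \<in> tests T \<Longrightarrow> i < length t \<Longrightarrow> j < length t \<Longrightarrow> i \<noteq> j \<Longrightarrow>
    cg T (t!i) (t!j) # map (nth t) (filter (\<lambda>k. k \<noteq> i \<and> k \<noteq> j) [0..<length t]) \<in> tests T"
  using OPT_axioms(14) by blast

lemma dom_cg: "cg_ok T f g \<Longrightarrow> sdom T (cg T f g) = sdom T f \<and> scod T (cg T f g) = scod T f"
  using OPT_axioms(15) by blast

lemma seq_cg:
  "cg_ok T f g \<Longrightarrow> scod T h = sdom T f \<Longrightarrow> scod T h = sdom T g \<Longrightarrow>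
    seq T (cg T f g) h = cg T (seq T f h) (seq T g h)"
  using OPT_axioms(16) by blast

lemma is_test_seq:
  "is_test T t A B \<Longrightarrow> is_test T u B C \<Longrightarrow>
    is_test T (concat (map (\<lambda>f. map (\<lambda>g. seq T g f) u) t)) A C"
  using seq_test[of t A B u C] dom_seq unfolding is_test_def by auto

lemma Tr1_seq: "f \<in> Tr1 T A B \<Longrightarrow> g \<in> Tr1 T B C \<Longrightarrow> seq T g f \<in> Tr1 T A C"
  using is_test_seq[of "[f]" A B "[g]" C] unfolding Tr1_def by simp

lemma Tr1_par: "f \<in> Tr1 T A B \<Longrightarrow> g \<in> Tr1 T C D \<Longrightarrow> par T f g \<in> Tr1 T (psys T A C) (psys T B D)"
  using par_test[of "[f]" "[g]"] unfolding Tr1_def is_test_def by simp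

lemma Tr1_ident: "ident T A \<in> Tr1 T A A"
  using ident_test unfolding Tr1_def is_test_def by simp

lemma Tr1_imp_Tr: "f \<in> Tr1 T A B \<Longrightarrow> f \<in> Tr T A B"
  unfolding Tr1_def Tr_def by force

lemma dom_Tr: "f \<in> Tr T A B \<Longrightarrow> sdom T f = A \<and> scod T f = B"
  unfolding Tr_def is_test_def by blast

lemma dom_Tr1: "f \<in> Tr1 T A B \<Longrightarrow> sdom T f = A \<and> scod T f = B"
  unfolding Tr1_def is_test_def by simp

lemma seq_in_seq_test:
  "f \<in> set t \<Longrightarrow> g \<in> set u \<Longrightarrow> seq T g f \<in> set (concat (map (\<lambda>f. map (\<lambda>g. seq T g f) u) t))"
  by auto

lemma Tr_seq: "f \<in> Tr T A B \<Longrightarrow> g \<in> Tr T B C \<Longrightarrow> seq T g f \<in> Tr T A C"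
  using is_test_seq seq_in_seq_test unfolding Tr_def by blast

lemma test_Eff: "is_test T t A (triv T) \<Longrightarrow> k < length t \<Longrightarrow> t!k \<in> Eff T A"
  unfolding Eff_def Tr_def using nth_mem by blast

lemma pairing_nonneg: "a \<in> Eff T A \<Longrightarrow> \<Phi> \<in> St T A \<Longrightarrow> 0 \<le> pairing T a \<Phi>"
  using prb_test[OF is_test_seq] seq_in_seq_test
  unfolding pairing_def Eff_def St_def Tr_def by blast

lemma ev_pow_St1: "\<rho> \<in> St1 T A \<Longrightarrow> ev_pow T \<rho> N \<in> St1 T (sys_pow T A N)"
proof (induction N)
  case 0
  show ?case using Tr1_ident[of "triv T"] unfolding St1_def by simp
next
  case (Suc N)
  then show ?case using Tr1_par[of \<rho> "triv T" A "ev_pow T \<rho> N" "triv T" "sys_pow T A N"]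
    unfolding St1_def by simp
qed

section \<open>Coarse graining\<close>

lemma pairing_cg:
  assumes t: "is_test T t A (triv T)" and ij: "i < length t" "j < length t" "i \<noteq> j"
    and \<Phi>: "\<Phi> \<in> St T A"
  shows "pairing T (cg T (t!i) (t!j)) \<Phi> = pairing T (t!i) \<Phi> + pairing T (t!j) \<Phi>"
proof -
  obtain t0 where t0: "is_test T t0 (triv T) A" "\<Phi> \<in> set t0"
    using \<Phi> unfolding St_def Tr_def by blast
  have ok: "cg_ok T (t!i) (t!j)" unfolding cg_ok_def using t ij unfolding is_test_def by blast
  have dom: "sdom T (t!i) = A" "sdom T (t!j) = A" "scod T (t!i) = triv T"
    using t ij nth_mem unfolding is_test_def by blast+
  have dom\<Phi>: "scod T \<Phi> = A" "sdom T \<Phi> = triv T" using t0 unfolding is_test_def by blast+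
  have cg_seq: "seq T (cg T (t!i) (t!j)) \<Phi> = cg T (seq T (t!i) \<Phi>) (seq T (t!j) \<Phi>)"
    using seq_cg[OF ok] dom\<Phi> dom by simp
  txt \<open>The two compositions are distinct outcomes of the sequential test \<open>t \<circ> t0\<close>.\<close>
  define F where "F = (\<lambda>f. map (\<lambda>g. seq T g f) t)"
  define u where "u = concat (map F t0)"
  have u: "u \<in> tests T" using seq_test[OF t0(1) t] unfolding u_def F_def by simp
  obtain xs ys where t0_split: "t0 = xs @ \<Phi> # ys" using t0(2) by (meson split_list)
  define L where "L = length (concat (map F xs))"
  have u_split: "u = concat (map F xs) @ F \<Phi> @ concat (map F ys)" unfolding u_def t0_split by simp
  have "length (F \<Phi>) = length t" unfolding F_def by simp
  then have "u ! (L + i) = seq T (t!i) \<Phi>" "u ! (L + j) = seq T (t!j) \<Phi>"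
      "L + i < length u" "L + j < length u"
    unfolding u_split L_def using ij by (simp_all add: nth_append F_def)
  then have ok_seq: "cg_ok T (seq T (t!i) \<Phi>) (seq T (t!j) \<Phi>)"
    unfolding cg_ok_def using u ij by (metis add_left_cancel)
  have "sdom T (seq T (t!i) \<Phi>) = triv T" "scod T (seq T (t!i) \<Phi>) = triv T"
    using dom_seq[of \<Phi> "t!i"] dom\<Phi> dom by simp_all
  then show ?thesis unfolding pairing_def cg_seq using prb_cg[OF ok_seq] by blast
qed

lemma is_test_cg:
  assumes t: "is_test T t A B" and ij: "i < length t" "j < length t" "i \<noteq> j"
  shows "is_test T (cg T (t!i) (t!j) # map (nth t) (filter (\<lambda>k. k \<noteq> i \<and> k \<noteq> j) [0..<length t])) A B"
proof -
  have ok: "cg_ok T (t!i) (t!j)" unfolding cg_ok_def using t ij unfolding is_test_def by blast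
  have "sdom T (cg T (t!i) (t!j)) = A \<and> scod T (cg T (t!i) (t!j)) = B"
    using dom_cg[OF ok] t ij nth_mem unfolding is_test_def by metis
  then show ?thesis
    using cg_test[OF _ ij] t nth_mem unfolding is_test_def by auto
qed

lemma coarse_grain_step:
  assumes t: "is_test T t A (triv T)" and S: "S \<subseteq> {..<length t}"
    and ij: "i \<in> S" "j \<in> S" "i \<noteq> j"
  shows "\<exists>t1 S1. is_test T t1 A (triv T) \<and> S1 \<subseteq> {..<length t1} \<and> S1 \<noteq> {} \<and> card S1 < card S \<and>
    (\<forall>\<Phi>\<in>St T A. (\<Sum>k\<in>S1. pairing T (t1!k) \<Phi>) = (\<Sum>k\<in>S. pairing T (t!k) \<Phi>)) \<and>
    (S = {..<length t} \<longrightarrow> S1 = {..<length t1})"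
proof -
  have finS: "finite S" using S finite_subset by blast
  have il: "i < length t" "j < length t" using ij S by auto
  define fl where "fl = filter (\<lambda>k. k \<noteq> i \<and> k \<noteq> j) [0..<length t]"
  define t1 where "t1 = cg T (t!i) (t!j) # map (nth t) fl"
  define M where "M = {m. m < length fl \<and> fl!m \<in> S}"
  define S1 where "S1 = insert 0 (Suc ` M)"
  have set_fl: "set fl = {k. k < length t \<and> k \<noteq> i \<and> k \<noteq> j}" unfolding fl_def by auto
  have inj: "inj_on (nth fl) M" using inj_on_nth[of fl] unfolding M_def fl_def by auto
  have image: "nth fl ` M = S - {i, j}"
    unfolding M_def nth_image_indices set_fl using S by auto
  have finM: "finite M" unfolding M_def by simp
  have test: "is_test T t1 A (triv T)" unfolding t1_def fl_def using is_test_cg[OF t il ij(3)] .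
  have sub: "S1 \<subseteq> {..<length t1}" unfolding S1_def M_def t1_def by auto
  have "card S1 = Suc (card (S - {i, j}))"
    unfolding S1_def using finM card_image[OF inj] image by (simp add: card_image)
  also have "\<dots> < card S"
    using ij finS card_mono[OF finS, of "{i, j}"] by (simp add: card_Diff_subset)
  finally have card: "card S1 < card S" .
  have sums: "(\<Sum>k\<in>S1. pairing T (t1!k) \<Phi>) = (\<Sum>k\<in>S. pairing T (t!k) \<Phi>)"
    if \<Phi>: "\<Phi> \<in> St T A" for \<Phi>
  proof -
    have "(\<Sum>k\<in>S1. pairing T (t1!k) \<Phi>) = pairing T (t1!0) \<Phi> + (\<Sum>k\<in>Suc ` M. pairing T (t1!k) \<Phi>)"
      unfolding S1_def using finM by simp
    also have "(\<Sum>k\<in>Suc ` M. pairing T (t1!k) \<Phi>) = (\<Sum>m\<in>M. pairing T (t!(fl!m)) \<Phi>)"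
      by (simp add: sum.reindex t1_def M_def)
    also have "(\<Sum>m\<in>M. pairing T (t!(fl!m)) \<Phi>) = (\<Sum>k\<in>S - {i, j}. pairing T (t!k) \<Phi>)"
      using sum.reindex[OF inj, of "\<lambda>k. pairing T (t!k) \<Phi>"] image by simp
    also have "pairing T (t1!0) \<Phi> = pairing T (t!i) \<Phi> + pairing T (t!j) \<Phi>"
      unfolding t1_def using pairing_cg[OF t il ij(3) \<Phi>] by simp
    finally show ?thesis
      using ij finS
      by (simp add: sum.remove[of S i] sum.remove[of "S - {i}" j] insert_Diff_if)
        (metis Diff_insert2 add.assoc)
  qed
  have full: "S1 = {..<length t1}" if "S = {..<length t}"
  proof -
    have "M = {..<length fl}" unfolding M_def that using set_fl nth_mem by fastforce
    then show ?thesis unfolding S1_def t1_def using lessThan_Suc_eq_insert_0 by auto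
  qed
  have "S1 \<noteq> {}" unfolding S1_def by blast
  with test sub card sums full show ?thesis by blast
qed

lemma coarse_grain:
  assumes "is_test T t A (triv T)" "S \<subseteq> {..<length t}" "S \<noteq> {}"
  shows "\<exists>t' i. is_test T t' A (triv T) \<and> i < length t' \<and>
    (\<forall>\<Phi>\<in>St T A. pairing T (t'!i) \<Phi> = (\<Sum>k\<in>S. pairing T (t!k) \<Phi>)) \<and>
    (S = {..<length t} \<longrightarrow> length t' = 1)"
  using assms
proof (induction "card S" arbitrary: t S rule: less_induct)
  case less
  have finS: "finite S" using less.prems(2) finite_subset by blast
  show ?case
  proof (cases "card S = 1")
    case True
    then obtain k where "S = {k}" using card_1_singletonE by blast
    moreover have "S = {..<length t} \<longrightarrow> length t = 1" using True by auto
    ultimately show ?thesis using less.prems(1,2) by auto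
  next
    case False
    then have "\<not> card S \<le> Suc 0" using less.prems(3) finS by (simp add: le_Suc_eq)
    then obtain i j where "i \<in> S" "j \<in> S" "i \<noteq> j"
      using card_le_Suc0_iff_eq[OF finS] by blast
    then obtain t1 S1
      where "is_test T t1 A (triv T)" "S1 \<subseteq> {..<length t1}" "S1 \<noteq> {}" "card S1 < card S"
        "\<forall>\<Phi>\<in>St T A. (\<Sum>k\<in>S1. pairing T (t1!k) \<Phi>) = (\<Sum>k\<in>S. pairing T (t!k) \<Phi>)"
        "S = {..<length t} \<longrightarrow> S1 = {..<length t1}"
      using coarse_grain_step[OF less.prems(1,2)] by blast
    with less.hyps[of S1 t1] show ?thesis by metis
  qed
qed

end

section \<open>Strong causality\<close>

locale strongly_causal_opt = opt_theory T for T :: "('s, 'e) opt" +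
  assumes causal: "strongly_causal T"
begin

lemma unique_det_eff: "\<exists>!e. e \<in> Tr1 T A (triv T)"
  using causal unfolding strongly_causal_def by blast

lemma det_eff_Tr1: "det_eff T A \<in> Tr1 T A (triv T)"
  unfolding det_eff_def using unique_det_eff by (rule theI')

lemma Tr1_triv_eq_det_eff: "f \<in> Tr1 T A (triv T) \<Longrightarrow> f = det_eff T A"
  using unique_det_eff det_eff_Tr1 by blast

lemma det_eff_Eff: "det_eff T A \<in> Eff T A"
  using Tr1_imp_Tr[OF det_eff_Tr1] unfolding Eff_def .

text \<open>Coarse-graining a whole test yields a deterministic effect, hence the deterministic one.\<close>

lemma sum_pairing_test:
  assumes t: "is_test T t A (triv T)" and \<Phi>: "\<Phi> \<in> St T A"
  shows "(\<Sum>k<length t. pairing T (t!k) \<Phi>) = pairing T (det_eff T A) \<Phi>"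
proof -
  have "{..<length t} \<noteq> {}" using tests_nonempty t unfolding is_test_def by auto
  then obtain t' i where t': "is_test T t' A (triv T)" and i: "i < length t'"
      and sum: "\<forall>\<Xi>\<in>St T A. pairing T (t'!i) \<Xi> = (\<Sum>k<length t. pairing T (t!k) \<Xi>)"
      and "length t' = 1"
    using coarse_grain[OF t order_refl] by blast
  then obtain a where a: "t' = [a]" by (metis One_nat_def length_0_conv length_Suc_conv)
  then have "a = det_eff T A" using t' Tr1_triv_eq_det_eff unfolding Tr1_def by blast
  with a i sum \<Phi> show ?thesis by simp
qed

lemma det_eff_seq: "Q \<in> Tr1 T Y X \<Longrightarrow> seq T (det_eff T X) Q = det_eff T Y"
  using Tr1_triv_eq_det_eff[OF Tr1_seq[OF _ det_eff_Tr1]] .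

lemma pairing_det_eff_seq:
  assumes Q: "Q \<in> Tr1 T Y X" and \<Psi>: "\<Psi> \<in> St T Y"
  shows "pairing T (det_eff T X) (seq T Q \<Psi>) = pairing T (det_eff T Y) \<Psi>"
proof -
  have "scod T \<Psi> = sdom T Q" "scod T Q = sdom T (det_eff T X)"
    using dom_Tr \<Psi> dom_Tr1[OF Q] dom_Tr1[OF det_eff_Tr1] unfolding St_def by auto
  then show ?thesis unfolding pairing_def using seq_assoc det_eff_seq[OF Q] by simp
qed

definition normalized :: "'s \<Rightarrow> 'e \<Rightarrow> bool" where
  "normalized Y \<Psi> \<longleftrightarrow> \<Psi> \<in> St T Y \<and> pairing T (det_eff T Y) \<Psi> = 1"

lemma normalized_St1: "\<rho> \<in> St1 T X \<Longrightarrow> normalized X \<rho>"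
proof -
  assume \<rho>: "\<rho> \<in> St1 T X"
  then have "seq T (det_eff T X) \<rho> \<in> Tr1 T (triv T) (triv T)"
    using Tr1_seq det_eff_Tr1 unfolding St1_def by blast
  then have "prb T (seq T (det_eff T X) \<rho>) = 1" using prb_test unfolding Tr1_def by force
  then show ?thesis
    using \<rho> Tr1_imp_Tr unfolding normalized_def pairing_def St1_def St_def by blast
qed

lemma normalized_seq:
  assumes \<Psi>: "normalized Y \<Psi>" and Q: "Q \<in> Tr1 T Y X"
  shows "normalized X (seq T Q \<Psi>)"
proof -
  have St: "\<Psi> \<in> St T Y" using \<Psi> unfolding normalized_def by blast
  have "seq T Q \<Psi> \<in> St T X"
    using Tr_seq[OF St[unfolded St_def] Tr1_imp_Tr[OF Q]] unfolding St_def .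
  then show ?thesis using \<Psi> pairing_det_eff_seq[OF Q St] unfolding normalized_def by simp
qed

lemma pairing_le_1:
  assumes \<Psi>: "normalized Y \<Psi>" and a: "a \<in> Eff T Y"
  shows "pairing T a \<Psi> \<le> 1"
proof -
  obtain t where t: "is_test T t Y (triv T)" "a \<in> set t"
    using a unfolding Eff_def Tr_def by blast
  then obtain i where i: "i < length t" "t!i = a" by (meson in_set_conv_nth)
  have St: "\<Psi> \<in> St T Y" using \<Psi> unfolding normalized_def by blast
  have "0 \<le> pairing T (t!k) \<Psi>" if "k \<in> {..<length t}" for k
    using pairing_nonneg[OF test_Eff[OF t(1)] St] that by simp
  then have "pairing T a \<Psi> \<le> (\<Sum>k<length t. pairing T (t!k) \<Psi>)"
    using member_le_sum[of i "{..<length t}" "\<lambda>k. pairing T (t!k) \<Psi>"] i by auto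
  then show ?thesis using sum_pairing_test[OF t(1) St] \<Psi> unfolding normalized_def by simp
qed

section \<open>Fidelity and operational distance\<close>

lemma pairing_in_unit_interval:
  "normalized Y \<Psi> \<Longrightarrow> a \<in> Eff T Y \<Longrightarrow> 0 \<le> pairing T a \<Psi> \<and> pairing T a \<Psi> \<le> 1"
  using pairing_nonneg pairing_le_1 unfolding normalized_def by blast

lemma sum_pairing_test_normalized:
  "normalized Y \<Psi> \<Longrightarrow> is_test T t Y (triv T) \<Longrightarrow> (\<Sum>k<length t. pairing T (t!k) \<Psi>) = 1"
  using sum_pairing_test unfolding normalized_def by simp

lemma sum_list_bhattacharyya:
  "sum_list (map (\<lambda>a. sqrt (pairing T a \<Psi> * pairing T a \<Phi>)) t)
    = (\<Sum>k<length t. sqrt (pairing T (t!k) \<Psi> * pairing T (t!k) \<Phi>))"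
  by (simp add: sum_list_sum_nth atLeast0LessThan)

context
  fixes Y \<Psi> \<Phi>
  assumes Psi: "normalized Y \<Psi>" and Phi: "normalized Y \<Phi>"
begin

lemma bhattacharyya_nonneg:
  "is_test T t Y (triv T) \<Longrightarrow> 0 \<le> sum_list (map (\<lambda>a. sqrt (pairing T a \<Psi> * pairing T a \<Phi>)) t)"
  unfolding sum_list_bhattacharyya
  using pairing_in_unit_interval[OF Psi] pairing_in_unit_interval[OF Phi] test_Eff
  by (intro sum_nonneg) simp

lemma fidelity_le_bhattacharyya:
  "is_test T t Y (triv T) \<Longrightarrow>
    fidelity T Y \<Psi> \<Phi> \<le> (\<Sum>k<length t. sqrt (pairing T (t!k) \<Psi> * pairing T (t!k) \<Phi>))"
  unfolding fidelity_def sum_list_bhattacharyya[symmetric]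
  by (rule cINF_lower) (auto intro!: bdd_belowI2[where m=0] bhattacharyya_nonneg)

lemma fidelity_nonneg: "0 \<le> fidelity T Y \<Psi> \<Phi>"
proof -
  have "is_test T [det_eff T Y] Y (triv T)" using det_eff_Tr1[of Y] unfolding Tr1_def by simp
  then show ?thesis unfolding fidelity_def by (intro cINF_greatest) (auto intro: bhattacharyya_nonneg)
qed

lemma pairing_diff_le_fidelity:
  assumes a: "a \<in> Eff T Y"
  shows "pairing T a \<Phi> - pairing T a \<Psi> \<le> sqrt (1 - (fidelity T Y \<Psi> \<Phi>)\<^sup>2)"
proof -
  obtain t where t: "is_test T t Y (triv T)" "a \<in> set t" using a unfolding Eff_def Tr_def by blast
  then obtain i where i: "i < length t" "t!i = a" by (meson in_set_conv_nth)
  define p q where "p k = pairing T (t!k) \<Psi>" "q k = pairing T (t!k) \<Phi>" for k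
  define K where "K = {..<length t} - {i}"
  have unit: "0 \<le> p k \<and> p k \<le> 1 \<and> 0 \<le> q k \<and> q k \<le> 1" if "k < length t" for k
    unfolding p_q_def
    using pairing_in_unit_interval[OF Psi] pairing_in_unit_interval[OF Phi] test_Eff[OF t(1) that]
    by blast
  have split: "(\<Sum>k<length t. f k) = f i + (\<Sum>k\<in>K. f k)" for f :: "nat \<Rightarrow> real"
    unfolding K_def using i by (simp add: sum.remove)
  have "fidelity T Y \<Psi> \<Phi> \<le> sqrt (p i * q i) + (\<Sum>k\<in>K. sqrt (p k * q k))"
    using fidelity_le_bhattacharyya[OF t(1)] unfolding split p_q_def .
  also have "\<dots> \<le> sqrt (p i * q i) + sqrt ((\<Sum>k\<in>K. p k) * (\<Sum>k\<in>K. q k))"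
    using sum_sqrt_mult_le[of K p q] unit unfolding K_def by auto
  also have "(\<Sum>k\<in>K. p k) = 1 - p i"
    using sum_pairing_test_normalized[OF Psi t(1)] split[of p] unfolding p_q_def by simp
  also have "(\<Sum>k\<in>K. q k) = 1 - q i"
    using sum_pairing_test_normalized[OF Phi t(1)] split[of q] unfolding p_q_def by simp
  finally have "fidelity T Y \<Psi> \<Phi> \<le> sqrt (p i * q i) + sqrt ((1 - p i) * (1 - q i))" .
  from two_outcome_bias_le[OF _ _ _ _ fidelity_nonneg this] show ?thesis
    using unit[OF i(1)] i(2) unfolding p_q_def by simp
qed

lemma op_dist_normalized:
  "op_dist T Y \<Phi> \<Psi> = (SUP a\<in>Eff T Y. 2 * (pairing T a \<Phi> - pairing T a \<Psi>))"
  using Psi Phi unfolding op_dist_def normalized_def by (simp add: algebra_simps)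

lemma bias_bdd_above: "bdd_above ((\<lambda>a. 2 * (pairing T a \<Phi> - pairing T a \<Psi>)) ` Eff T Y)"
  using pairing_in_unit_interval[OF Psi] pairing_in_unit_interval[OF Phi]
  by (intro bdd_aboveI2[where M=2]) force

lemma pairing_diff_le_op_dist:
  "a \<in> Eff T Y \<Longrightarrow> 2 * (pairing T a \<Phi> - pairing T a \<Psi>) \<le> op_dist T Y \<Phi> \<Psi>"
  unfolding op_dist_normalized by (rule cSUP_upper[OF _ bias_bdd_above])

lemma op_dist_nonneg: "0 \<le> op_dist T Y \<Phi> \<Psi>"
  using pairing_diff_le_op_dist[OF det_eff_Eff] Psi Phi unfolding normalized_def by simp

lemma op_dist_le_fidelity: "op_dist T Y \<Phi> \<Psi> \<le> 2 * sqrt (1 - (fidelity T Y \<Psi> \<Phi>)\<^sup>2)"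
  unfolding op_dist_normalized
proof (rule cSUP_least)
  show "Eff T Y \<noteq> {}" using det_eff_Eff by blast
  show "2 * (pairing T a \<Phi> - pairing T a \<Psi>) \<le> 2 * sqrt (1 - (fidelity T Y \<Psi> \<Phi>)\<^sup>2)"
    if "a \<in> Eff T Y" for a
    using pairing_diff_le_fidelity[OF that] by simp
qed

lemma sum_diff_le_op_dist:
  assumes t: "is_test T t Y (triv T)" and S: "S \<subseteq> {..<length t}"
  shows "2 * (\<Sum>k\<in>S. pairing T (t!k) \<Phi> - pairing T (t!k) \<Psi>) \<le> op_dist T Y \<Phi> \<Psi>"
proof (cases "S = {}")
  case True
  then show ?thesis using op_dist_nonneg by simp
next
  case False
  then obtain t' i where t': "is_test T t' Y (triv T)" "i < length t'"
      "\<forall>\<Xi>\<in>St T Y. pairing T (t'!i) \<Xi> = (\<Sum>k\<in>S. pairing T (t!k) \<Xi>)"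
    using coarse_grain[OF t S] by blast
  have "pairing T (t'!i) \<Phi> - pairing T (t'!i) \<Psi>
      = (\<Sum>k\<in>S. pairing T (t!k) \<Phi> - pairing T (t!k) \<Psi>)"
    using t'(3) Psi Phi unfolding normalized_def by (simp add: sum_subtractf)
  then show ?thesis using pairing_diff_le_op_dist[OF test_Eff[OF t'(1,2)]] by simp
qed

lemma bhattacharyya_ge_op_dist:
  assumes t: "is_test T t Y (triv T)"
  shows "1 - op_dist T Y \<Phi> \<Psi> / 2 \<le> (\<Sum>k<length t. sqrt (pairing T (t!k) \<Psi> * pairing T (t!k) \<Phi>))"
proof -
  define p q where "p k = pairing T (t!k) \<Psi>" "q k = pairing T (t!k) \<Phi>" for k
  define S where "S = {k. k < length t \<and> p k < q k}"
  have S: "S \<subseteq> {..<length t}" unfolding S_def by auto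
  have "1 - op_dist T Y \<Phi> \<Psi> / 2 \<le> (\<Sum>k<length t. q k) - (\<Sum>k\<in>S. q k - p k)"
    using sum_pairing_test_normalized[OF Phi t] sum_diff_le_op_dist[OF t S]
    unfolding p_q_def by simp
  also have "(\<Sum>k\<in>S. q k - p k) = (\<Sum>k\<in>{..<length t} \<inter> S. q k - p k)"
    using S by (simp add: Int_absorb1)
  also have "\<dots> = (\<Sum>k<length t. if k \<in> S then q k - p k else 0)"
    by (simp add: sum.inter_restrict)
  also have "(\<Sum>k<length t. q k) - \<dots> = (\<Sum>k<length t. min (p k) (q k))"
    unfolding sum_subtractf[symmetric] by (rule sum.cong) (auto simp: S_def)
  also have "\<dots> \<le> (\<Sum>k<length t. sqrt (p k * q k))"
    using pairing_in_unit_interval[OF Psi] pairing_in_unit_interval[OF Phi] test_Eff[OF t]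
    by (intro sum_mono min_le_sqrt_mult) (auto simp: p_q_def)
  finally show ?thesis unfolding p_q_def .
qed

lemma fidelity_ge_op_dist: "1 - op_dist T Y \<Phi> \<Psi> / 2 \<le> fidelity T Y \<Psi> \<Phi>"
  unfolding fidelity_def sum_list_bhattacharyya
proof (rule cINF_greatest)
  show "{t. is_test T t Y (triv T)} \<noteq> {}" using det_eff_Tr1[of Y] unfolding Tr1_def by blast
qed (simp add: bhattacharyya_ge_op_dist)

lemma fidelity_sq_ge_op_dist: "1 - op_dist T Y \<Phi> \<Psi> \<le> (fidelity T Y \<Psi> \<Phi>)\<^sup>2"
proof (cases "op_dist T Y \<Phi> \<Psi> \<le> 2")
  case True
  have "1 - op_dist T Y \<Phi> \<Psi> \<le> (1 - op_dist T Y \<Phi> \<Psi> / 2)\<^sup>2"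
    using zero_le_power2[of "op_dist T Y \<Phi> \<Psi> / 2"] by (simp add: power2_diff power_divide)
  also have "\<dots> \<le> (fidelity T Y \<Psi> \<Phi>)\<^sup>2"
    using True fidelity_ge_op_dist by (intro power_mono) auto
  finally show ?thesis .
next
  case False
  then show ?thesis using zero_le_power2[of "fidelity T Y \<Psi> \<Phi>"] by linarith
qed

end

definition dilation_error :: "'s \<Rightarrow> 'e \<Rightarrow> 'e \<Rightarrow> real" where
  "dilation_error X \<rho> Ch = (SUP (C, \<Psi>)\<in>dilations T X \<rho>.
     op_dist T (psys T X C) (seq T (par T Ch (ident T C)) \<Psi>) \<Psi>)"

lemma triv_in_dilations:
  assumes \<rho>: "\<rho> \<in> St1 T X"
  shows "(triv T, \<rho>) \<in> dilations T X \<rho>"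
proof -
  have "det_eff T (triv T) = ident T (triv T)"
    using Tr1_triv_eq_det_eff[OF Tr1_ident] by simp
  moreover have "scod T \<rho> = X" using dom_Tr1 \<rho> unfolding St1_def by blast
  ultimately have "seq T (par T (ident T X) (det_eff T (triv T))) \<rho> = \<rho>"
    using par_ident seq_ident_left[of \<rho>] by simp
  moreover have "\<rho> \<in> St T (psys T X (triv T))"
    using Tr1_imp_Tr \<rho> unfolding St1_def St_def by simp
  ultimately show ?thesis unfolding dilations_def by simp
qed

lemma normalized_dilation:
  assumes \<rho>: "\<rho> \<in> St1 T X" and dil: "(C, \<Psi>) \<in> dilations T X \<rho>"
  shows "normalized (psys T X C) \<Psi>"
proof -
  define Q where "Q = par T (ident T X) (det_eff T C)"
  have Q: "Q \<in> Tr1 T (psys T X C) X"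
    unfolding Q_def using Tr1_par[OF Tr1_ident det_eff_Tr1, of X C] by simp
  have \<Psi>: "\<Psi> \<in> St T (psys T X C)" and "seq T Q \<Psi> = \<rho>"
    using dil unfolding dilations_def Q_def by simp_all
  then have "pairing T (det_eff T (psys T X C)) \<Psi> = pairing T (det_eff T X) \<rho>"
    using pairing_det_eff_seq[OF Q \<Psi>] by simp
  with \<Psi> normalized_St1[OF \<rho>] show ?thesis unfolding normalized_def by simp
qed

lemma normalized_dilation_image:
  "\<rho> \<in> St1 T X \<Longrightarrow> (C, \<Psi>) \<in> dilations T X \<rho> \<Longrightarrow> Ch \<in> Tr1 T X X \<Longrightarrow>
    normalized (psys T X C) (seq T (par T Ch (ident T C)) \<Psi>)"
  using normalized_seq[OF normalized_dilation Tr1_par[OF _ Tr1_ident]] by blast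

context
  fixes X \<rho> Ch
  assumes \<rho>: "\<rho> \<in> St1 T X" and Ch: "Ch \<in> Tr1 T X X"
begin

lemma dilation_bounds:
  assumes "(C, \<Psi>) \<in> dilations T X \<rho>"
  defines "d \<equiv> op_dist T (psys T X C) (seq T (par T Ch (ident T C)) \<Psi>) \<Psi>"
    and "F \<equiv> fidelity T (psys T X C) \<Psi> (seq T (par T Ch (ident T C)) \<Psi>)"
  shows "d \<le> 2" and "1 - d \<le> F\<^sup>2" and "d \<le> 2 * sqrt (1 - F\<^sup>2)"
proof -
  note normalized = normalized_dilation[OF \<rho> assms(1)] normalized_dilation_image[OF \<rho> assms(1) Ch]
  show "d \<le> 2 * sqrt (1 - F\<^sup>2)" "1 - d \<le> F\<^sup>2"
    unfolding d_def F_def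
    using op_dist_le_fidelity[OF normalized] fidelity_sq_ge_op_dist[OF normalized] by simp_all
  then show "d \<le> 2" using zero_le_power2[of F] by (smt (verit) real_sqrt_le_1_iff)
qed

lemma dilation_error_bdd_above:
  "bdd_above ((\<lambda>(C, \<Psi>). op_dist T (psys T X C) (seq T (par T Ch (ident T C)) \<Psi>) \<Psi>) ` dilations T X \<rho>)"
  by (rule bdd_aboveI2[where M = 2]) (auto intro: dilation_bounds(1))

lemma corr_fidelity_ge_dilation_error: "1 - dilation_error X \<rho> Ch \<le> corr_fidelity T X \<rho> Ch"
  unfolding corr_fidelity_def
proof (rule cINF_greatest)
  show "dilations T X \<rho> \<noteq> {}" using triv_in_dilations[OF \<rho>] by blast
  fix x assume x: "x \<in> dilations T X \<rho>"
  show "1 - dilation_error X \<rho> Ch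
      \<le> (case x of (C, \<Psi>) \<Rightarrow> (fidelity T (psys T X C) \<Psi> (seq T (par T Ch (ident T C)) \<Psi>))\<^sup>2)"
  proof (cases x)
    case (Pair C \<Psi>)
    have "op_dist T (psys T X C) (seq T (par T Ch (ident T C)) \<Psi>) \<Psi> \<le> dilation_error X \<rho> Ch"
      unfolding dilation_error_def using cSUP_upper[OF x dilation_error_bdd_above] Pair by simp
    with dilation_bounds(2)[OF x[unfolded Pair]] show ?thesis unfolding Pair by simp
  qed
qed

lemma dilation_error_le_corr_fidelity:
  "dilation_error X \<rho> Ch \<le> 2 * sqrt (1 - corr_fidelity T X \<rho> Ch)"
  unfolding dilation_error_def
proof (rule cSUP_least)
  show "dilations T X \<rho> \<noteq> {}" using triv_in_dilations[OF \<rho>] by blast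
  fix x assume x: "x \<in> dilations T X \<rho>"
  show "(case x of (C, \<Psi>) \<Rightarrow> op_dist T (psys T X C) (seq T (par T Ch (ident T C)) \<Psi>) \<Psi>)
      \<le> 2 * sqrt (1 - corr_fidelity T X \<rho> Ch)"
  proof (cases x)
    case (Pair C \<Psi>)
    have "bdd_below ((\<lambda>(C, \<Psi>). (fidelity T (psys T X C) \<Psi> (seq T (par T Ch (ident T C)) \<Psi>))\<^sup>2)
        ` dilations T X \<rho>)"
      by (rule bdd_belowI2[where m = 0]) (simp add: case_prod_beta)
    then have "corr_fidelity T X \<rho> Ch \<le> (fidelity T (psys T X C) \<Psi> (seq T (par T Ch (ident T C)) \<Psi>))\<^sup>2"
      unfolding corr_fidelity_def using cINF_lower[OF _ x] Pair by fastforce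
    then have "sqrt (1 - (fidelity T (psys T X C) \<Psi> (seq T (par T Ch (ident T C)) \<Psi>))\<^sup>2)
        \<le> sqrt (1 - corr_fidelity T X \<rho> Ch)"
      by simp
    with dilation_bounds(3)[OF x[unfolded Pair]] show ?thesis unfolding Pair prod.case by linarith
  qed
qed

end

lemma dilation_error_ident: "\<rho> \<in> St1 T X \<Longrightarrow> dilation_error X \<rho> (ident T X) = 0"
proof -
  assume \<rho>: "\<rho> \<in> St1 T X"
  have "op_dist T (psys T X C) (seq T (par T (ident T X) (ident T C)) \<Psi>) \<Psi> = 0"
    if "(C, \<Psi>) \<in> dilations T X \<rho>" for C \<Psi>
  proof -
    have "scod T \<Psi> = psys T X C"
      using that dom_Tr unfolding dilations_def St_def by blast
    then have "seq T (par T (ident T X) (ident T C)) \<Psi> = \<Psi>"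
      using par_ident seq_ident_left[of \<Psi>] by simp
    moreover have "Eff T (psys T X C) \<noteq> {}" using det_eff_Eff by blast
    ultimately show ?thesis unfolding op_dist_def by (simp add: cSUP_const)
  qed
  then have "dilation_error X \<rho> (ident T X) = (SUP x\<in>dilations T X \<rho>. 0)"
    unfolding dilation_error_def by (intro SUP_cong) auto
  moreover have "dilations T X \<rho> \<noteq> {}" using triv_in_dilations[OF \<rho>] by blast
  ultimately show ?thesis by (simp add: cSUP_const)
qed

end

section \<open>Optimal rates\<close>

definition limsup_rate :: "(nat \<Rightarrow> nat \<Rightarrow> real \<Rightarrow> 'x set) \<Rightarrow> real \<Rightarrow> ereal" where
  "limsup_rate S \<epsilon> = limsup (\<lambda>N. ereal (real (LEAST M. S N M \<epsilon> \<noteq> {}) / real N))"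

lemma Lim_at_right_0_antimono:
  fixes g :: "real \<Rightarrow> ereal"
  assumes antimono: "\<And>e e'. 0 < e \<Longrightarrow> e \<le> e' \<Longrightarrow> g e' \<le> g e"
  shows "Lim (at_right 0) g = (SUP e\<in>{0<..}. g e)"
proof (rule tendsto_Lim)
  show "\<not> trivial_limit (at_right (0::real))" by simp
  show "(g \<longlongrightarrow> (SUP e\<in>{0<..}. g e)) (at_right 0)"
  proof (rule order_tendstoI)
    fix a assume "a < (SUP e\<in>{0<..}. g e)"
    then obtain e0 where e0: "0 < e0" "a < g e0" unfolding less_SUP_iff by auto
    have "a < g y" if "0 < y" "y < e0" for y
      using antimono[of y e0] that e0(2) by simp
    then show "\<forall>\<^sub>F x in at_right 0. a < g x"
      unfolding eventually_at_right_field using e0(1) by blast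
  next
    fix a assume a: "(SUP e\<in>{0<..}. g e) < a"
    have "g y < a" if "0 < y" for y :: real
      using SUP_upper[of y "{0<..}" g] that a by simp
    then show "\<forall>\<^sub>F x in at_right 0. g x < a"
      unfolding eventually_at_right_field using zero_less_one by blast
  qed
qed

lemma limsup_rate_le:
  assumes ex: "\<And>N. \<exists>M. S' N M e' \<noteq> {}" and sub: "\<And>N M. S' N M e' \<subseteq> S N M e"
  shows "limsup_rate S e \<le> limsup_rate S' e'"
  unfolding limsup_rate_def
proof (intro Limsup_mono always_eventually allI)
  fix N
  have "S' N (LEAST M. S' N M e' \<noteq> {}) e' \<noteq> {}" using ex by (rule LeastI_ex)
  then have "S N (LEAST M. S' N M e' \<noteq> {}) e \<noteq> {}" using sub by blast
  then have "(LEAST M. S N M e \<noteq> {}) \<le> (LEAST M. S' N M e' \<noteq> {})" by (rule Least_le)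
  then show "ereal (real (LEAST M. S N M e \<noteq> {}) / real N)
      \<le> ereal (real (LEAST M. S' N M e' \<noteq> {}) / real N)"
    by (simp add: divide_right_mono)
qed

lemma comp_rate_eq_SUP:
  fixes S :: "nat \<Rightarrow> nat \<Rightarrow> real \<Rightarrow> ('x \<times> 'x) set"
  assumes mono: "\<And>N M e e'. e \<le> e' \<Longrightarrow> S N M e \<subseteq> S N M e'"
    and ex: "\<And>N e. 0 < e \<Longrightarrow> \<exists>M. S N M e \<noteq> {}"
  shows "comp_rate S = (SUP e\<in>{0<..}. limsup_rate S e)"
proof -
  have "comp_rate S = Lim (at_right 0) (limsup_rate S)"
    unfolding comp_rate_def limsup_rate_def ..
  also have "\<dots> = (SUP e\<in>{0<..}. limsup_rate S e)"
  proof (rule Lim_at_right_0_antimono)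
    fix e e' :: real assume "0 < e" "e \<le> e'"
    then show "limsup_rate S e' \<le> limsup_rate S e" using ex mono by (intro limsup_rate_le) auto
  qed
  finally show ?thesis .
qed

lemma SUP_limsup_rate_le:
  assumes ex: "\<And>N e. 0 < e \<Longrightarrow> \<exists>M. S' N M e \<noteq> {}"
    and dom: "\<And>e. 0 < e \<Longrightarrow> \<exists>d>0. \<forall>N M. S' N M d \<subseteq> S N M e"
  shows "(SUP e\<in>{0<..}. limsup_rate S e) \<le> (SUP e\<in>{0<..}. limsup_rate S' e)"
proof (rule SUP_least)
  fix e :: real assume "e \<in> {0<..}"
  then obtain d where d: "0 < d" "\<forall>N M. S' N M d \<subseteq> S N M e" using dom[of e] by auto
  have "limsup_rate S e \<le> limsup_rate S' d" using ex[OF d(1)] d(2) by (intro limsup_rate_le) auto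
  also have "\<dots> \<le> (SUP e\<in>{0<..}. limsup_rate S' e)" using d(1) by (intro SUP_upper) simp
  finally show "limsup_rate S e \<le> (SUP e\<in>{0<..}. limsup_rate S' e)" .
qed

lemma comp_rate_eqI:
  fixes S S' :: "nat \<Rightarrow> nat \<Rightarrow> real \<Rightarrow> ('x \<times> 'x) set"
  assumes mono: "\<And>N M e e'. e \<le> e' \<Longrightarrow> S N M e \<subseteq> S N M e'"
    and mono': "\<And>N M e e'. e \<le> e' \<Longrightarrow> S' N M e \<subseteq> S' N M e'"
    and ex': "\<And>N e. 0 < e \<Longrightarrow> \<exists>M. S' N M e \<noteq> {}"
    and dom: "\<And>e. 0 < e \<Longrightarrow> \<exists>d>0. \<forall>N M. S' N M d \<subseteq> S N M e"
    and dom': "\<And>e. 0 < e \<Longrightarrow> \<exists>d>0. \<forall>N M. S N M d \<subseteq> S' N M e"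
  shows "comp_rate S = comp_rate S'"
proof -
  have ex: "\<exists>M. S N M e \<noteq> {}" if "0 < e" for N e
    using dom[OF that] ex' by blast
  have "(SUP e\<in>{0<..}. limsup_rate S e) \<le> (SUP e\<in>{0<..}. limsup_rate S' e)"
    using ex' dom by (rule SUP_limsup_rate_le)
  moreover have "(SUP e\<in>{0<..}. limsup_rate S' e) \<le> (SUP e\<in>{0<..}. limsup_rate S e)"
    using ex dom' by (rule SUP_limsup_rate_le)
  ultimately show ?thesis
    using comp_rate_eq_SUP[of S, OF mono ex] comp_rate_eq_SUP[of S', OF mono' ex'] by simp
qed

lemma schemes_F_mono: "e \<le> e' \<Longrightarrow> schemes_F T Ob A \<rho> N M e \<subseteq> schemes_F T Ob A \<rho> N M e'"
  unfolding schemes_F_def by auto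

lemma schemes_dil_mono: "e \<le> e' \<Longrightarrow> schemes_dil T Ob A \<rho> N M e \<subseteq> schemes_dil T Ob A \<rho> N M e'"
  unfolding schemes_dil_def by auto

context strongly_causal_opt
begin

lemma schemes_dil_nonempty:
  assumes "digitalizable_via T Ob" and "\<rho> \<in> St1 T A" and "0 < e"
  shows "\<exists>M. schemes_dil T Ob A \<rho> N M e \<noteq> {}"
proof -
  obtain k E D where "E \<in> Tr1 T (sys_pow T A N) (sys_pow T Ob k)"
      "D \<in> Tr1 T (sys_pow T Ob k) (sys_pow T A N)" "seq T D E = ident T (sys_pow T A N)"
    using assms(1) unfolding digitalizable_via_def by blast
  then have "(E, D) \<in> schemes_dil T Ob A \<rho> N k e"
    using dilation_error_ident[OF ev_pow_St1[OF assms(2)]] assms(3)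
    unfolding schemes_dil_def dilation_error_def by simp
  then show ?thesis by blast
qed

lemma schemes_dil_subset_schemes_F:
  assumes "\<rho> \<in> St1 T A"
  shows "schemes_dil T Ob A \<rho> N M e \<subseteq> schemes_F T Ob A \<rho> N M e"
proof
  fix x assume "x \<in> schemes_dil T Ob A \<rho> N M e"
  then obtain E D where x: "x = (E, D)" and E: "E \<in> Tr1 T (sys_pow T A N) (sys_pow T Ob M)"
    and D: "D \<in> Tr1 T (sys_pow T Ob M) (sys_pow T A N)"
    and "dilation_error (sys_pow T A N) (ev_pow T \<rho> N) (seq T D E) < e"
    unfolding schemes_dil_def dilation_error_def by blast
  then have "corr_fidelity T (sys_pow T A N) (ev_pow T \<rho> N) (seq T D E) > 1 - e"
    using corr_fidelity_ge_dilation_error[OF ev_pow_St1[OF assms] Tr1_seq[OF E D]] by linarith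
  with x E D show "x \<in> schemes_F T Ob A \<rho> N M e" unfolding schemes_F_def by simp
qed

lemma schemes_F_subset_schemes_dil:
  assumes "\<rho> \<in> St1 T A"
  shows "schemes_F T Ob A \<rho> N M e \<subseteq> schemes_dil T Ob A \<rho> N M (2 * sqrt e)"
proof
  fix x assume "x \<in> schemes_F T Ob A \<rho> N M e"
  then obtain E D where x: "x = (E, D)" and E: "E \<in> Tr1 T (sys_pow T A N) (sys_pow T Ob M)"
    and D: "D \<in> Tr1 T (sys_pow T Ob M) (sys_pow T A N)"
    and "1 - corr_fidelity T (sys_pow T A N) (ev_pow T \<rho> N) (seq T D E) < e"
    unfolding schemes_F_def by auto
  then have "dilation_error (sys_pow T A N) (ev_pow T \<rho> N) (seq T D E) < 2 * sqrt e"
    using dilation_error_le_corr_fidelity[OF ev_pow_St1[OF assms] Tr1_seq[OF E D]]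
      real_sqrt_less_mono[of "1 - corr_fidelity T (sys_pow T A N) (ev_pow T \<rho> N) (seq T D E)" e]
    by linarith
  with x E D show "x \<in> schemes_dil T Ob A \<rho> N M (2 * sqrt e)"
    unfolding schemes_dil_def dilation_error_def by simp
qed

end

theorem mainTheorem6:
  fixes T :: "('s, 'e) opt" and Ob A :: 's and \<rho> :: 'e
  assumes "OPT T"
    and "strongly_causal T"
    and "digitalizable_via T Ob"
    and "\<rho> \<in> St1 T A"
  shows "I_F T Ob A \<rho> = I_dil T Ob A \<rho>"
proof -
  interpret strongly_causal_opt T using assms(1,2) by unfold_locales
  show ?thesis unfolding I_F_def I_dil_def
  proof (rule comp_rate_eqI)
    show "\<exists>M. schemes_dil T Ob A \<rho> N M e \<noteq> {}" if "0 < e" for N e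
      using schemes_dil_nonempty[OF assms(3,4) that] .
    show "\<exists>d>0. \<forall>N M. schemes_dil T Ob A \<rho> N M d \<subseteq> schemes_F T Ob A \<rho> N M e" if "0 < e" for e
      using that schemes_dil_subset_schemes_F[OF assms(4)] by blast
    show "\<exists>d>0. \<forall>N M. schemes_F T Ob A \<rho> N M d \<subseteq> schemes_dil T Ob A \<rho> N M e" if "0 < e" for e
    proof (intro exI[of _ "(e / 2)\<^sup>2"] conjI allI)
      show "0 < (e / 2)\<^sup>2" using that by simp
      have "2 * sqrt ((e / 2)\<^sup>2) = e" using that by simp
      then show "schemes_F T Ob A \<rho> N M ((e / 2)\<^sup>2) \<subseteq> schemes_dil T Ob A \<rho> N M e" for N M
        using schemes_F_subset_schemes_dil[OF assms(4), of Ob N M "(e / 2)\<^sup>2"] by simp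
    qed
  qed (simp_all add: schemes_F_mono schemes_dil_mono)
qed

end
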